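(* Let $W,V$ be subspaces of $\mathbb{R}^n$ with $\mathbb{R}^n=W\oplus V^\perp$, and let $\mu$ and $\nu$ be probabilistic frames for $W$ and $V$ respectively. Then $\mu$ and $\nu$ perform probabilistic consistent reconstruction if and only if $\nu$ is an oblique dual probabilistic frame of $\mu$ on $V$.
   Context: $\mathcal{P}_2(W)$ denotes Borel probability measures on $\mathbb{R}^n$ concentrated on $W$ with finite second moment. $\mu\in\mathcal{P}_2(W)$ is a probabilistic frame for $W$ if there exist $0<A\le B<\infty$ with $A\|\mathbf{x}\|^2\le\int_W|\langle\mathbf{x},\mathbf{y}\rangle|^2d\mu(\mathbf{y})\le B\|\mathbf{x}\|^2$ for all $\mathbf{x}\in W$. $\Gamma(\mu,\nu)$ is the set of Borel probability measures on $W\times V$ with marginals $\mu$ and $\nu$. $\boldsymbol{\pi}_{WV^\perp}$ is the oblique projection of $\mathbb{R}^n$ onto $W$ along $V^\perp$. $\nu\in\mathcal{P}_2(V)$ is an oblique dual probabilistic frame of $\mu\in\mathcal{P}_2(W)$ on $V$ if there exists $\gamma\in\Gamma(\mu,\nu)$ with $\boldsymbol{\pi}_{WV^\perp}=\int_{W\times V}\mathbf{x}\mathbf{y}^t\,d\gamma(\mathbf{x},\mathbf{y})$. $\mu$ and $\nu$ perform probabilistic consistent reconstruction if there exists $\gamma\in\Gamma(\mu,\nu)$ such that for every $\mathbf{f}\in\mathbb{R}^n$, $\langle\mathbf{f},\mathbf{z}\rangle=\langle\hat{\mathbf{f}},\mathbf{z}\rangle$ for $\nu$-almost all $\mathbf{z}\in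 V$, where $\hat{\mathbf{f}}=\int_{W\times V}\mathbf{x}\langle\mathbf{y},\mathbf{f}\rangle\,d\gamma(\mathbf{x},\mathbf{y})$. *)

theory Defs
  imports "HOL-Analysis.Analysis" "HOL-Probability.Probability"
begin


definition P2 :: "(real^'n) set \<Rightarrow> (real^'n) measure \<Rightarrow> bool" where
  "P2 W \<mu> \<longleftrightarrow> prob_space \<mu> \<and> sets \<mu> = sets borel \<and> emeasure \<mu> W = 1
      \<and> integrable \<mu> (\<lambda>y. (norm y)\<^sup>2)"

definition prob_frame :: "(real^'n) set \<Rightarrow> (real^'n) measure \<Rightarrow> bool" where
  "prob_frame W \<mu> \<longleftrightarrow> P2 W \<mu> \<and>
     (\<exists>A B. 0 < A \<and> A \<le> B \<and>
        (\<forall>x\<in>W. A * (norm x)\<^sup>2 \<le> (\<integral>y. \<bar>x \<bullet> y\<bar>\<^sup>2 \<partial>\<mu>) \<and>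
                (\<integral>y. \<bar>x \<bullet> y\<bar>\<^sup>2 \<partial>\<mu>) \<le> B * (norm x)\<^sup>2))"

text \<open>Gamma(mu,nu): Borel probability measures on the product with marginals mu and nu
  (such measures are automatically concentrated on W x V).\<close>
definition couplings :: "(real^'n) measure \<Rightarrow> (real^'n) measure \<Rightarrow> ((real^'n) \<times> (real^'n)) measure set" where
  "couplings \<mu> \<nu> = {\<gamma>. prob_space \<gamma> \<and> sets \<gamma> = sets borel \<and>
       distr \<gamma> borel fst = \<mu> \<and> distr \<gamma> borel snd = \<nu>}"

definition oblique_proj :: "(real^'n) set \<Rightarrow> (real^'n) set \<Rightarrow> real^'n \<Rightarrow> real^'n" where
  "oblique_proj W V x = (THE w. w \<in> W \<and> x - w \<in> orthogonal_comp V)"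

definition outer :: "real^'n \<Rightarrow> real^'n \<Rightarrow> real^'n^'n" where
  "outer x y = (\<chi> i j. x $ i * y $ j)"

definition oblique_dual :: "(real^'n) set \<Rightarrow> (real^'n) set \<Rightarrow> (real^'n) measure \<Rightarrow> (real^'n) measure \<Rightarrow> bool" where
  "oblique_dual W V \<mu> \<nu> \<longleftrightarrow>
     (\<exists>\<gamma>\<in>couplings \<mu> \<nu>. matrix (oblique_proj W V) = (\<integral>p. outer (fst p) (snd p) \<partial>\<gamma>))"

definition consistent_reconstruction :: "(real^'n) measure \<Rightarrow> (real^'n) measure \<Rightarrow> bool" where
  "consistent_reconstruction \<mu> \<nu> \<longleftrightarrow>
     (\<exists>\<gamma>\<in>couplings \<mu> \<nu>. \<forall>f::real^'n.
        AE z in \<nu>. f \<bullet> z = (\<integral>p. (snd p \<bullet> f) *\<^sub>R fst p \<partial>\<gamma>) \<bullet> z)"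

end

theory Submission
  imports Defs
begin

text \<open>
  For a coupling \<open>\<gamma>\<close> let \<open>M = \<integral> x y\<^sup>T d\<gamma>\<close>, so that the reconstruction of \<open>f\<close> is
  \<open>M f = \<integral> x \<langle>y, f\<rangle> d\<gamma>\<close>, a vector of \<open>W\<close> because \<open>\<mu>\<close> lives on \<open>W\<close>. By the lower frame
  bound of \<open>\<nu>\<close>, a vector is orthogonal to \<nu>-almost every point iff it lies in \<open>V\<^sup>\<bottom>\<close>;
  hence consistency means \<open>f - M f \<in> V\<^sup>\<bottom>\<close> for all \<open>f\<close>, i.e. \<open>M f\<close> is the component of
  \<open>f\<close> in \<open>W\<close> along \<open>V\<^sup>\<bottom>\<close>, i.e. \<open>M\<close> is the matrix of the oblique projection.
\<close>

lemma oblique_decomp_unique: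
  fixes W V :: "(real^'n) set"
  assumes "subspace W" "W \<inter> V\<^sup>\<bottom> = {0}"
    and "w1 \<in> W" "x - w1 \<in> V\<^sup>\<bottom>" "w2 \<in> W" "x - w2 \<in> V\<^sup>\<bottom>"
  shows "w1 = w2"
proof -
  have "w1 - w2 \<in> W"
    using subspace_diff[OF assms(1,3,5)] .
  moreover have "(x - w2) - (x - w1) \<in> V\<^sup>\<bottom>"
    using subspace_diff[OF subspace_orthogonal_comp assms(6,4)] .
  ultimately have "w1 - w2 \<in> W \<inter> V\<^sup>\<bottom>"
    by simp
  then show ?thesis
    unfolding assms(2) by simp
qed

lemma oblique_proj_mem:
  fixes W V :: "(real^'n) set"
  assumes "subspace W" "W + V\<^sup>\<bottom> = UNIV" "W \<inter> V\<^sup>\<bottom> = {0}"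
  shows "oblique_proj W V x \<in> W" and "x - oblique_proj W V x \<in> V\<^sup>\<bottom>"
proof -
  have "x \<in> W + V\<^sup>\<bottom>"
    using assms(2) by simp
  then obtain w u where "w \<in> W" "u \<in> V\<^sup>\<bottom>" "x = w + u"
    by (auto elim: set_plus_elim)
  then have "\<exists>!w. w \<in> W \<and> x - w \<in> V\<^sup>\<bottom>"
    using oblique_decomp_unique[OF assms(1,3)] by (intro ex1I[of _ w]) auto
  then have "oblique_proj W V x \<in> W \<and> x - oblique_proj W V x \<in> V\<^sup>\<bottom>"
    unfolding oblique_proj_def by (rule theI')
  then show "oblique_proj W V x \<in> W" and "x - oblique_proj W V x \<in> V\<^sup>\<bottom>"
    by auto
qed

lemma oblique_proj_eq_iff:
  fixes W V :: "(real^'n) set"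
  assumes "subspace W" "W + V\<^sup>\<bottom> = UNIV" "W \<inter> V\<^sup>\<bottom> = {0}" and "w \<in> W"
  shows "oblique_proj W V x = w \<longleftrightarrow> x - w \<in> V\<^sup>\<bottom>"
  using oblique_proj_mem[OF assms(1-3)] oblique_decomp_unique[OF assms(1,3)] assms(4) by blast

lemma linear_oblique_proj:
  fixes W V :: "(real^'n) set"
  assumes "subspace W" "W + V\<^sup>\<bottom> = UNIV" "W \<inter> V\<^sup>\<bottom> = {0}"
  shows "linear (oblique_proj W V)"
proof (rule linearI)
  let ?P = "oblique_proj W V"
  note mem = oblique_proj_mem[OF assms] and eq_iff = oblique_proj_eq_iff[OF assms, THEN iffD2]
  fix x y :: "real^'n" and r :: real
  have "(x - ?P x) + (y - ?P y) \<in> V\<^sup>\<bottom>"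
    using mem by (simp add: subspace_add subspace_orthogonal_comp)
  moreover have "(x - ?P x) + (y - ?P y) = (x + y) - (?P x + ?P y)"
    by simp
  ultimately show "?P (x + y) = ?P x + ?P y"
    using mem assms(1) by (intro eq_iff) (simp_all add: subspace_add)
  have "r *\<^sub>R (x - ?P x) \<in> V\<^sup>\<bottom>"
    using mem by (simp add: subspace_scale subspace_orthogonal_comp)
  moreover have "r *\<^sub>R (x - ?P x) = r *\<^sub>R x - r *\<^sub>R ?P x"
    by (simp add: scaleR_diff_right)
  ultimately show "?P (r *\<^sub>R x) = r *\<^sub>R ?P x"
    using mem assms(1) by (intro eq_iff) (simp_all add: subspace_scale)
qed

lemma matrix_eq_iff_apply:
  fixes f :: "real^'n \<Rightarrow> real^'m"
  assumes "linear f"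
  shows "matrix f = A \<longleftrightarrow> (\<forall>x. f x = A *v x)"
  using matrix_works[OF assms[folded linear_matrix_vector_mul_eq]] by (simp add: matrix_eq)

lemma norm_outer: "norm (outer x y) = norm x * norm y"
proof -
  have row: "outer x y $ i = (x $ i) *\<^sub>R y" for i
    by (simp add: outer_def vec_eq_iff)
  have "norm (outer x y) = L2_set (\<lambda>i. norm (outer x y $ i)) UNIV"
    by (simp add: norm_vec_def)
  also have "\<dots> = L2_set (\<lambda>i. norm y * \<bar>x $ i\<bar>) UNIV"
    by (rule L2_set_cong) (simp_all add: row)
  also have "\<dots> = norm y * L2_set (\<lambda>i. \<bar>x $ i\<bar>) UNIV"
    by (simp add: L2_set_right_distrib)
  also have "\<dots> = norm x * norm y"
    by (simp add: norm_vec_def)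
  finally show ?thesis .
qed

lemma outer_mult_vec: "outer x y *v f = (y \<bullet> f) *\<^sub>R x"
  by (simp add: vec_eq_iff outer_def matrix_vector_mult_def inner_vec_def sum_distrib_left
      mult.assoc mult.commute mult.left_commute)

lemma bounded_linear_matrix_vector_mult_left:
  "bounded_linear (\<lambda>A::real^'n^'m. A *v x)"
proof -
  have "linear (\<lambda>A::real^'n^'m. A *v x)"
    by (auto intro!: linearI simp: vec_eq_iff matrix_vector_mult_def sum.distrib
        sum_distrib_left algebra_simps)
  then show ?thesis
    by (simp add: linear_conv_bounded_linear)
qed

lemma integral_in_subspace:
  fixes g :: "'a \<Rightarrow> 'b::euclidean_space"
  assumes "subspace W" "integrable M g" "AE x in M. g x \<in> W"
  shows "integral\<^sup>L M g \<in> W"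
proof -
  have "u \<bullet> integral\<^sup>L M g = 0" if "u \<in> W\<^sup>\<bottom>" for u
  proof -
    have "AE x in M. u \<bullet> g x = 0"
      using assms(3)
      by eventually_elim (use that in \<open>auto simp: orthogonal_comp_def orthogonal_def inner_commute\<close>)
    then have "(\<integral>x. u \<bullet> g x \<partial>M) = 0"
      by (rule integral_eq_zero_AE)
    then show ?thesis
      using assms(2) by simp
  qed
  then have "integral\<^sup>L M g \<in> W\<^sup>\<bottom>\<^sup>\<bottom>"
    by (auto simp: orthogonal_comp_def orthogonal_def)
  then show ?thesis
    using orthogonal_comp_self[OF assms(1)] by simp
qed

lemma measurable_continuous_sets_borel:
  assumes "sets M = sets borel" "continuous_on UNIV f"
  shows "f \<in> borel_measurable M"
  using borel_measurable_continuous_onI[OF assms(2)] measurable_cong_sets[OF assms(1) refl] by blast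

lemma P2_AE_mem:
  assumes "P2 W \<mu>" "closed W"
  shows "AE x in \<mu>. x \<in> W"
proof -
  have "prob_space \<mu>" "W \<in> sets \<mu>" "measure \<mu> W = 1"
    using assms by (auto simp: P2_def measure_def)
  then show ?thesis
    by (simp add: prob_space.AE_in_set_eq_1)
qed

lemma prob_frame_AE_orthogonal_imp_zero:
  assumes "prob_frame V \<nu>" "u \<in> V" "AE z in \<nu>. u \<bullet> z = 0"
  shows "u = 0"
proof -
  obtain A where "0 < A" "A * (norm u)\<^sup>2 \<le> (\<integral>z. \<bar>u \<bullet> z\<bar>\<^sup>2 \<partial>\<nu>)"
    using assms(1,2) unfolding prob_frame_def by blast
  moreover have "(\<integral>z. \<bar>u \<bullet> z\<bar>\<^sup>2 \<partial>\<nu>) = 0"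
    using assms(3) by (intro integral_eq_zero_AE) auto
  ultimately show ?thesis
    by (simp add: mult_le_0_iff)
qed

lemma prob_frame_AE_orthogonal_iff:
  fixes V :: "(real^'n) set"
  assumes "subspace V" "prob_frame V \<nu>"
  shows "(AE z in \<nu>. u \<bullet> z = 0) \<longleftrightarrow> u \<in> V\<^sup>\<bottom>"
proof -
  obtain a b where a: "a \<in> span V" and b_orth: "\<And>w. w \<in> span V \<Longrightarrow> orthogonal b w"
    and u: "u = a + b"
    using orthogonal_subspace_decomp_exists[of V u] by metis
  have "a \<in> V"
    using a by (simp add: span_eq_iff[THEN iffD2, OF assms(1)])
  have b: "b \<in> V\<^sup>\<bottom>"
    using b_orth span_base by (auto simp: orthogonal_comp_def orthogonal_commute)
  have "AE z in \<nu>. z \<in> V"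
    using assms by (intro P2_AE_mem closed_subspace) (auto simp: prob_frame_def)
  then have "AE z in \<nu>. u \<bullet> z = 0 \<longleftrightarrow> a \<bullet> z = 0"
  proof eventually_elim
    case (elim z)
    then have "z \<bullet> b = 0"
      using b by (simp add: orthogonal_comp_def orthogonal_def)
    then show ?case
      by (simp add: u inner_add_left inner_commute[of b z])
  qed
  then have "(AE z in \<nu>. u \<bullet> z = 0) \<longleftrightarrow> (AE z in \<nu>. a \<bullet> z = 0)"
    by (rule eventually_subst)
  also have "\<dots> \<longleftrightarrow> a = 0"
    using prob_frame_AE_orthogonal_imp_zero[OF assms(2) \<open>a \<in> V\<close>] by auto
  also have "\<dots> \<longleftrightarrow> u \<in> V\<^sup>\<bottom>"
  proof
    assume "u \<in> V\<^sup>\<bottom>"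
    then have "a \<in> V\<^sup>\<bottom>"
      using subspace_diff[OF subspace_orthogonal_comp, of u V b] b by (simp add: u)
    then show "a = 0"
      using orthogonal_Int_0[OF assms(1)] \<open>a \<in> V\<close> by blast
  qed (use b u in simp)
  finally show ?thesis .
qed

lemma coupling_integrable_outer:
  assumes "\<gamma> \<in> couplings \<mu> \<nu>" "P2 W \<mu>" "P2 V \<nu>"
  shows "integrable \<gamma> (\<lambda>p. outer (fst p) (snd p))"
proof -
  have sets_\<gamma>: "sets \<gamma> = sets borel"
    and marginals: "distr \<gamma> borel fst = \<mu>" "distr \<gamma> borel snd = \<nu>"
    using assms(1) by (auto simp: couplings_def)
  have "fst \<in> borel_measurable \<gamma>" "snd \<in> borel_measurable \<gamma>"
    by (rule measurable_continuous_sets_borel[OF sets_\<gamma>], intro continuous_intros)+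
  moreover have norm2_borel: "(\<lambda>y::real^'n. (norm y)\<^sup>2) \<in> borel_measurable borel"
    by (rule measurable_continuous_sets_borel[OF refl]) (intro continuous_intros)
  ultimately have "integrable \<gamma> (\<lambda>p. (norm (fst p))\<^sup>2)" "integrable \<gamma> (\<lambda>p. (norm (snd p))\<^sup>2)"
    using assms(2,3) integrable_distr_eq[OF _ norm2_borel] marginals by (auto simp: P2_def)
  then have "integrable \<gamma> (\<lambda>p. (norm (fst p))\<^sup>2 + (norm (snd p))\<^sup>2)"
    by simp
  then show ?thesis
  proof (rule Bochner_Integration.integrable_bound)
    show "(\<lambda>p. outer (fst p) (snd p)) \<in> borel_measurable \<gamma>"
      unfolding outer_def by (rule measurable_continuous_sets_borel[OF sets_\<gamma>]) (intro continuous_intros)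
    have bound: "norm a * norm b \<le> (norm a)\<^sup>2 + (norm b)\<^sup>2" for a b :: "real^'n"
      using sum_squares_bound[of "norm a" "norm b"]
        mult_nonneg_nonneg[OF norm_ge_zero norm_ge_zero, of a b]
      by linarith
    show "AE p in \<gamma>. norm (outer (fst p) (snd p)) \<le> norm ((norm (fst p))\<^sup>2 + (norm (snd p))\<^sup>2)"
      by (intro AE_I2) (simp add: norm_outer bound)
  qed
qed

lemma coupling_reconstruction_eq:
  assumes "\<gamma> \<in> couplings \<mu> \<nu>" "P2 W \<mu>" "P2 V \<nu>"
  shows "(\<integral>p. (snd p \<bullet> f) *\<^sub>R fst p \<partial>\<gamma>) = (\<integral>p. outer (fst p) (snd p) \<partial>\<gamma>) *v f"
  using integral_bounded_linear[OF bounded_linear_matrix_vector_mult_left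
      coupling_integrable_outer[OF assms]]
  by (simp add: outer_mult_vec)

lemma coupling_reconstruction_mem:
  assumes "\<gamma> \<in> couplings \<mu> \<nu>" "P2 W \<mu>" "P2 V \<nu>" "subspace W"
  shows "(\<integral>p. outer (fst p) (snd p) \<partial>\<gamma>) *v f \<in> W"
proof -
  have sets_\<gamma>: "sets \<gamma> = sets borel" and marginal: "distr \<gamma> borel fst = \<mu>"
    using assms(1) by (auto simp: couplings_def)
  have fst_borel: "fst \<in> borel_measurable \<gamma>"
    by (rule measurable_continuous_sets_borel[OF sets_\<gamma>]) (intro continuous_intros)
  have "AE x in distr \<gamma> borel fst. x \<in> W"
    unfolding marginal by (rule P2_AE_mem[OF assms(2) closed_subspace[OF assms(4)]])
  then have "AE p in \<gamma>. fst p \<in> W"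
    using AE_distr_iff[OF fst_borel, of "\<lambda>x. x \<in> W"] closed_subspace[OF assms(4)] by simp
  then have "AE p in \<gamma>. (snd p \<bullet> f) *\<^sub>R fst p \<in> W"
    by eventually_elim (rule subspace_scale[OF assms(4)])
  moreover have "integrable \<gamma> (\<lambda>p. (snd p \<bullet> f) *\<^sub>R fst p)"
    using integrable_bounded_linear[OF bounded_linear_matrix_vector_mult_left
        coupling_integrable_outer[OF assms(1-3)]]
    by (simp add: outer_mult_vec)
  ultimately have "(\<integral>p. (snd p \<bullet> f) *\<^sub>R fst p \<partial>\<gamma>) \<in> W"
    by (intro integral_in_subspace[OF assms(4)])
  then show ?thesis
    by (simp add: coupling_reconstruction_eq[OF assms(1-3)])
qed

lemma coupling_consistent_iff_oblique_proj:
  fixes W V :: "(real^'n) set"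
  assumes "subspace W" "subspace V" "W + V\<^sup>\<bottom> = UNIV" "W \<inter> V\<^sup>\<bottom> = {0}"
    and "prob_frame W \<mu>" "prob_frame V \<nu>" "\<gamma> \<in> couplings \<mu> \<nu>"
  shows "(\<forall>f. AE z in \<nu>. f \<bullet> z = (\<integral>p. (snd p \<bullet> f) *\<^sub>R fst p \<partial>\<gamma>) \<bullet> z)
    \<longleftrightarrow> matrix (oblique_proj W V) = (\<integral>p. outer (fst p) (snd p) \<partial>\<gamma>)"
proof -
  define M where "M = (\<integral>p. outer (fst p) (snd p) \<partial>\<gamma>)"
  have P2: "P2 W \<mu>" "P2 V \<nu>"
    using assms(5,6) by (auto simp: prob_frame_def)
  have "(AE z in \<nu>. f \<bullet> z = (\<integral>p. (snd p \<bullet> f) *\<^sub>R fst p \<partial>\<gamma>) \<bullet> z)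
      \<longleftrightarrow> oblique_proj W V f = M *v f" for f
  proof -
    have "(AE z in \<nu>. f \<bullet> z = (\<integral>p. (snd p \<bullet> f) *\<^sub>R fst p \<partial>\<gamma>) \<bullet> z)
        \<longleftrightarrow> (AE z in \<nu>. (f - M *v f) \<bullet> z = 0)"
      by (simp add: coupling_reconstruction_eq[OF assms(7) P2] M_def inner_diff_left)
    also have "\<dots> \<longleftrightarrow> f - M *v f \<in> V\<^sup>\<bottom>"
      by (rule prob_frame_AE_orthogonal_iff[OF assms(2,6)])
    also have "\<dots> \<longleftrightarrow> oblique_proj W V f = M *v f"
      using oblique_proj_eq_iff[OF assms(1,3,4) coupling_reconstruction_mem[OF assms(7) P2 assms(1)]]
      by (simp add: M_def)
    finally show ?thesis .
  qed
  then show ?thesis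
    by (simp add: matrix_eq_iff_apply[OF linear_oblique_proj[OF assms(1,3,4)]] M_def)
qed

theorem theorem4p4:
  fixes W V :: "(real^'n) set" and \<mu> \<nu> :: "(real^'n) measure"
  assumes "subspace W" and "subspace V"
    and "W + orthogonal_comp V = UNIV" and "W \<inter> orthogonal_comp V = {0}"
    and "prob_frame W \<mu>" and "prob_frame V \<nu>"
  shows "consistent_reconstruction \<mu> \<nu> \<longleftrightarrow> oblique_dual W V \<mu> \<nu>"
  unfolding consistent_reconstruction_def oblique_dual_def
  using coupling_consistent_iff_oblique_proj[OF assms] by (intro bex_cong) simp_all

end
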